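(* Let $N,k$ be positive integers with $k\le N/2$, and for a real $c\ge3$ with $N/c$ a positive integer define $$\gamma(N,k,c)=\sum_{m=0}^{\lfloor k/2\rfloor}\binom{N/c}{m}^2\binom{(1-2/c)N}{k-2m}.$$ Then $\big(\binom{N}{k}-\gamma(N,k,c)\big)/\binom{N}{k}=O(k/c)$, with an absolute implied constant, for every such $c\ge3$.
   Context: $\big(\binom{N}{k}-\gamma(N,k,c)\big)/\binom{N}{k}$ equals the probability that a balance with $N/c$ coins on each pan is tilted, when the placed coins are chosen among $N$ coins of which $k$ uniformly random ones are false (all false coins having equal weight). *)

theory Defs
  imports Complex_Main
begin

text \<open>The binomial arguments N/c and (1-2/c)N are natural numbers whenever N/c is a
  positive integer and c >= 2; they are converted to nat via floor (exact in that case).\<close>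
definition gamma :: "nat \<Rightarrow> nat \<Rightarrow> real \<Rightarrow> real" where
  "gamma N k c =
     (\<Sum>m = 0..k div 2.
        real ((nat \<lfloor>real N / c\<rfloor>) choose m) ^ 2
        * real ((nat \<lfloor>(1 - 2 / c) * real N\<rfloor>) choose (k - 2 * m)))"

end

theory Submission
  imports Defs
begin

text \<open>Write \<open>n = N/c\<close> for the number of coins on each pan and \<open>M = N - 2n\<close> for the coins off
  the balance. Then \<open>\<gamma>(N,k,c)\<close> counts the \<open>k\<close>-sets of false coins splitting evenly between the
  pans, so \<open>\<binomial>M k \<le> \<gamma> \<le> \<binomial>N k\<close>; the first inequality is the term \<open>m = 0\<close>, the second is
  Vandermonde's identity. Adding the \<open>2n\<close> coins of the pans one at a time raises \<open>\<binomial>M k\<close> to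
  \<open>\<binomial>N k\<close> in steps of at most \<open>\<binomial>(N-1) (k-1) = (k/N) \<binomial>N k\<close>, so the relative deficit is at
  most \<open>2nk/N = 2k/c\<close>.\<close>

definition balanced_count :: "nat \<Rightarrow> nat \<Rightarrow> nat \<Rightarrow> nat" where
  "balanced_count n M k = (\<Sum>i = 0..k div 2. (n choose i)^2 * (M choose (k - 2*i)))"

lemma binomial_add_le:
  "(m + d) choose Suc j \<le> (m choose Suc j) + d * ((m + d - 1) choose j)"
proof (induction d)
  case 0
  then show ?case by simp
next
  case (Suc d)
  have "(m + Suc d) choose Suc j = ((m + d) choose Suc j) + ((m + d) choose j)"
    by simp
  also have "\<dots> \<le> (m choose Suc j) + d * ((m + d - 1) choose j) + ((m + d) choose j)"
    using Suc.IH by simp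
  also have "\<dots> \<le> (m choose Suc j) + Suc d * ((m + Suc d - 1) choose j)"
    using binomial_right_mono[of "m + d - 1" "m + d" j] by simp
  finally show ?case .
qed

lemma binomial_le_balanced_count: "M choose k \<le> balanced_count n M k"
  unfolding balanced_count_def
  by (rule order_trans[OF _ member_le_sum[of 0]]) auto

lemma balanced_count_le_binomial: "balanced_count n M k \<le> (2*n + M) choose k"
proof -
  define f where "f j = ((2*n) choose j) * (M choose (k - j))" for j
  have "balanced_count n M k \<le> (\<Sum>i = 0..k div 2. f (2*i))"
    unfolding balanced_count_def
  proof (rule sum_mono)
    fix i
    have "(n choose i)^2 = (n choose i) * (n choose (2*i - i))"
      by (simp add: power2_eq_square)
    also have "\<dots> \<le> (\<Sum>l\<le>2*i. (n choose l) * (n choose (2*i - l)))"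
      by (rule member_le_sum) auto
    also have "\<dots> = (2*n) choose (2*i)"
      using vandermonde[of n n "2*i"] by (simp add: mult_2)
    finally show "(n choose i)^2 * (M choose (k - 2*i)) \<le> f (2*i)"
      unfolding f_def by simp
  qed
  also have "\<dots> = sum f ((\<lambda>i. 2*i) ` {0..k div 2})"
    by (subst sum.reindex) (auto simp: inj_on_def)
  also have "\<dots> \<le> sum f {..k}"
    by (rule sum_mono2) auto
  also have "\<dots> = (2*n + M) choose k"
    unfolding f_def by (rule vandermonde)
  finally show ?thesis .
qed

lemma binomial_diff_balanced_count_le:
  assumes "0 < k"
  shows "(2*n + M) * (((2*n + M) choose k) - balanced_count n M k) \<le> 2*n * k * ((2*n + M) choose k)"
proof -
  define N where "N = 2*n + M"
  obtain j where j: "k = Suc j"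
    using assms by (cases k) auto
  have "(N choose k) - balanced_count n M k \<le> (N choose k) - (M choose k)"
    using binomial_le_balanced_count by (simp add: diff_le_mono2)
  also have "\<dots> \<le> 2*n * ((N - 1) choose j)"
    using binomial_add_le[of M "2*n" j] by (simp add: N_def j add.commute)
  finally have "N * ((N choose k) - balanced_count n M k) \<le> 2*n * (N * ((N - 1) choose j))"
    by simp
  also have "N * ((N - 1) choose j) = k * (N choose k)"
    using times_binomial_minus1_eq[of k N] assms j by simp
  finally show ?thesis
    by (simp add: N_def mult.assoc)
qed

lemma gamma_eq_balanced_count:
  assumes "real N / c = real n" and "c \<ge> 2"
  shows "gamma N k c = real (balanced_count n (N - 2*n) k)"
proof -
  have N: "real N = c * real n"
    using assms by (simp add: field_simps)
  then have "real (2*n) \<le> real N"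
    using assms(2) by (simp add: mult_right_mono)
  then have "2*n \<le> N"
    by linarith
  then have "(1 - 2 / c) * real N = real (N - 2*n)"
    using N assms(2) by (simp add: field_simps of_nat_diff)
  then have "nat \<lfloor>(1 - 2 / c) * real N\<rfloor> = N - 2*n"
    by simp
  then show ?thesis
    unfolding gamma_def balanced_count_def using assms(1) by simp
qed

theorem lemma6:
  shows "\<exists>C::real. \<forall>(N::nat) (k::nat) (c::real).
           k \<ge> 1 \<and> 2 * k \<le> N \<and> c \<ge> 3 \<and> (\<exists>n::nat. n \<ge> 1 \<and> real N / c = real n) \<longrightarrow>
           \<bar>(real (N choose k) - gamma N k c) / real (N choose k)\<bar> \<le> C * real k / c"
proof (intro exI[of _ 2] allI impI)
  fix N k :: nat and c :: real
  assume "k \<ge> 1 \<and> 2 * k \<le> N \<and> c \<ge> 3 \<and> (\<exists>n::nat. n \<ge> 1 \<and> real N / c = real n)"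
  then obtain n where k: "k \<ge> 1" "2*k \<le> N" and c: "c \<ge> 3" and n: "real N / c = real n"
    by auto
  define G where "G = balanced_count n (N - 2*n) k"
  have gamma: "gamma N k c = real G"
    unfolding G_def using gamma_eq_balanced_count[OF n] c by simp
  have N: "real N = c * real n"
    using n c by (simp add: field_simps)
  have "real (2*n) \<le> real N"
    using N c by (simp add: mult_right_mono)
  then have NM: "2*n + (N - 2*n) = N"
    by simp
  have G_le: "G \<le> N choose k"
    using balanced_count_le_binomial[of n "N - 2*n" k] by (simp add: G_def NM)
  have "N * ((N choose k) - G) \<le> 2*n * k * (N choose k)"
    using binomial_diff_balanced_count_le[of k n "N - 2*n"] k by (simp add: G_def NM)
  then have "real (N * ((N choose k) - G)) \<le> real (2 * n * k * (N choose k))"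
    by (simp only: of_nat_le_iff)
  then have "real N * (real (N choose k) - real G) \<le> 2 * real n * real k * real (N choose k)"
    by (simp only: of_nat_mult of_nat_numeral of_nat_diff[OF G_le])
  then have "real n * (c * (real (N choose k) - real G)) \<le> real n * (2 * real k * real (N choose k))"
    by (simp add: N algebra_simps)
  then have "c * (real (N choose k) - real G) \<le> 2 * real k * real (N choose k)"
    using N c k by (auto simp: mult_le_cancel_left)
  moreover have "0 < real (N choose k)"
    using k by simp
  ultimately show "\<bar>(real (N choose k) - gamma N k c) / real (N choose k)\<bar> \<le> 2 * real k / c"
    using G_le c by (simp add: gamma abs_of_nonneg field_simps)
qed

end
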